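(* Let $R$ be a Noetherian ring and $J_1,J_2\subseteq I$ ideals. Assume that the pair of image ideals $\overline{J_2}\subseteq\overline I$ in $\overline R=R/J_1$ is Aluffi torsion-free. Suppose there is a minimal generating set $f_1,\ldots,f_s$ of $J_1$ such that (1) $J_1=(f_1,\ldots,f_s)\subseteq I$ is strongly Aluffi torsion-free, and (2) the images $\widetilde{f_1},\ldots,\widetilde{f_s}$ form a regular sequence in $\widetilde R=R/J_2$. Then the pair $J_2\subseteq I$ is Aluffi torsion-free.
   Context: A pair of ideals $J\subseteq I$ in a ring $R$ is called Aluffi torsion-free if $J\cap I^n=JI^{n-1}$ for all $n\ge1$ (with $I^0=R$). For an ideal $J=(f_1,\ldots,f_t)\subseteq I$ with given ordered generators, the pair is called strongly Aluffi torsion-free if $(f_1,\ldots,f_i)\subseteq I$ is Aluffi torsion-free for each $i=1,\ldots,t$. *)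

theory Defs
  imports "HOL-Algebra.Algebra"
begin

fun ideal_pow :: "('a, 'b) ring_scheme \<Rightarrow> 'a set \<Rightarrow> nat \<Rightarrow> 'a set" where
  "ideal_pow R I 0 = carrier R"
| "ideal_pow R I (Suc n) = ideal_prod R I (ideal_pow R I n)"

definition aluffi_torsion_free :: "('a, 'b) ring_scheme \<Rightarrow> 'a set \<Rightarrow> 'a set \<Rightarrow> bool" where
  "aluffi_torsion_free R J I \<longleftrightarrow>
     J \<subseteq> I \<and> (\<forall>n\<ge>1. J \<inter> ideal_pow R I n = ideal_prod R J (ideal_pow R I (n - 1)))"

definition strongly_aluffi_torsion_free :: "('a, 'b) ring_scheme \<Rightarrow> 'a list \<Rightarrow> 'a set \<Rightarrow> bool" where
  "strongly_aluffi_torsion_free R fs I \<longleftrightarrow>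
     (\<forall>i\<in>{1..length fs}. aluffi_torsion_free R (Idl\<^bsub>R\<^esub> (set (take i fs))) I)"

definition minimal_generating_list :: "('a, 'b) ring_scheme \<Rightarrow> 'a list \<Rightarrow> 'a set \<Rightarrow> bool" where
  "minimal_generating_list R fs J \<longleftrightarrow>
     set fs \<subseteq> carrier R \<and> distinct fs \<and> J = Idl\<^bsub>R\<^esub> (set fs) \<and>
     (\<forall>A. A \<subset> set fs \<longrightarrow> Idl\<^bsub>R\<^esub> A \<noteq> J)"

definition regular_sequence :: "('a, 'b) ring_scheme \<Rightarrow> 'a list \<Rightarrow> bool" where
  "regular_sequence R xs \<longleftrightarrow>
     set xs \<subseteq> carrier R \<and> Idl\<^bsub>R\<^esub> (set xs) \<noteq> carrier R \<and>
     (\<forall>i<length xs. \<forall>y\<in>carrier R.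
        xs ! i \<otimes>\<^bsub>R\<^esub> y \<in> Idl\<^bsub>R\<^esub> (set (take i xs)) \<longrightarrow> y \<in> Idl\<^bsub>R\<^esub> (set (take i xs)))"

definition quot_image :: "('a, 'b) ring_scheme \<Rightarrow> 'a set \<Rightarrow> 'a set \<Rightarrow> 'a set set" where
  "quot_image R K A = (\<lambda>a. a_r_coset R K a) ` A"

end

theory Submission imports Defs begin

(* Write K_k for the ideal generated by f_1, ..., f_k, and call J \<subseteq> I Aluffi torsion-free
   modulo L if (J + L) \<inter> (I^n + L) \<subseteq> J I^(n-1) + L for all n \<ge> 1, i.e. if the images of
   J \<subseteq> I in R/L form an Aluffi torsion-free pair.  For L = K_s = J_1 this is the hypothesis
   on R/J_1, and for L = K_0 = 0 it is the claim, so it suffices to descend from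
   K_(k+1) = (f) + K_k to K_k, where f = f_(k+1).  This is an induction on n: modulo J_2 I^n,
   an element of (J_2 + K_k) \<inter> (I^(n+1) + K_k) lies in (f) + K_k and hence, since
   K_(k+1) \<subseteq> I is Aluffi torsion-free, has the form f a + k with a \<in> I^n.  As f is a
   nonzerodivisor modulo J_2 + K_k, also a \<in> J_2 + K_k, so the induction hypothesis gives
   a \<in> J_2 I^(n-1) + K_k and therefore f a \<in> J_2 I^n + K_k. *)

no_notation Sum_Type.Plus (infixr \<open><+>\<close> 65)

definition aluffi_torsion_free_modulo ::
    "('a, 'b) ring_scheme \<Rightarrow> 'a set \<Rightarrow> 'a set \<Rightarrow> 'a set \<Rightarrow> bool" where
  "aluffi_torsion_free_modulo R J I L \<longleftrightarrow>
     (\<forall>n\<ge>1. (J <+>\<^bsub>R\<^esub> L) \<inter> (ideal_pow R I n <+>\<^bsub>R\<^esub> L)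
              \<subseteq> ideal_prod R J (ideal_pow R I (n - 1)) <+>\<^bsub>R\<^esub> L)"

context ring begin

lemma ideal_pow_ideal: "ideal A R \<Longrightarrow> ideal (ideal_pow R A n) R"
  by (induction n) (auto simp: oneideal ideal_prod_is_ideal)

lemma ideal_prod_mono_left:
  assumes "A \<subseteq> A'" shows "A \<cdot> B \<subseteq> A' \<cdot> B"
proof
  fix x assume "x \<in> A \<cdot> B" then show "x \<in> A' \<cdot> B"
    by (induction rule: ideal_prod.induct) (auto intro: ideal_prod.intros simp: subsetD[OF assms])
qed

lemma ideal_prod_ideal_pow_subset:
  assumes "ideal J R" "ideal I R" "J \<subseteq> I"
  shows "J \<cdot> ideal_pow R I n \<subseteq> J \<inter> ideal_pow R I (Suc n)"
  using ideal_prod_inter[OF assms(1) ideal_pow_ideal[OF assms(2)]] ideal_prod_mono_left[OF assms(3)]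
  by auto

lemma set_add_upper1: "ideal A R \<Longrightarrow> ideal B R \<Longrightarrow> A \<subseteq> A <+> B"
  using genideal_self union_genideal ideal.Icarr by (metis le_sup_iff subsetI)

lemma set_add_upper2: "ideal A R \<Longrightarrow> ideal B R \<Longrightarrow> B \<subseteq> A <+> B"
  using genideal_self union_genideal ideal.Icarr by (metis le_sup_iff subsetI)

lemma set_add_mono: "A \<subseteq> A' \<Longrightarrow> B \<subseteq> B' \<Longrightarrow> A <+> B \<subseteq> A' <+> B'"
  by (auto simp: set_add_def')

lemma set_add_least: "ideal C R \<Longrightarrow> A \<subseteq> C \<Longrightarrow> B \<subseteq> C \<Longrightarrow> A <+> B \<subseteq> C"
  by (auto simp: set_add_def' intro!: additive_subgroup.a_closed[OF ideal.axioms(1)])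

lemma set_add_memE:
  assumes "x \<in> A <+> B"
  obtains a b where "a \<in> A" "b \<in> B" "x = a \<oplus> b"
  using assms by (auto simp: set_add_def')

lemma set_add_zero_right: "A \<subseteq> carrier R \<Longrightarrow> A <+> {\<zero>} = A"
  by (force simp: set_add_def')

lemma genideal_empty: "Idl {} = {\<zero>}"
  using genideal_minimal[OF zeroideal] additive_subgroup.zero_closed[OF ideal.axioms(1)]
    genideal_ideal[of "{}"] by blast

lemma ideal_add_iff_left:
  assumes "ideal C R" "y \<in> C" "z \<in> carrier R"
  shows "y \<oplus> z \<in> C \<longleftrightarrow> z \<in> C"
proof
  have yc: "y \<in> carrier R" using ideal.Icarr[OF assms(1,2)] .
  assume "y \<oplus> z \<in> C"
  moreover have "z = \<ominus> y \<oplus> (y \<oplus> z)" using yc assms(3) by algebra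
  ultimately show "z \<in> C"
    using assms(1,2) by (metis additive_subgroup.a_closed additive_subgroup.a_inv_closed ideal.axioms(1))
qed (use assms in \<open>simp add: additive_subgroup.a_closed ideal.axioms(1)\<close>)

lemma ideal_add_iff_right:
  assumes "ideal C R" "k \<in> C" "z \<in> carrier R"
  shows "z \<oplus> k \<in> C \<longleftrightarrow> z \<in> C"
  using ideal_add_iff_left[OF assms] ideal.Icarr[OF assms(1,2)] assms(3) by (simp add: a_comm)

lemma quot_carrier: "ideal J R \<Longrightarrow> carrier (R Quot J) = (+>) J ` carrier R"
  by (auto simp: FactRing_def A_RCOSETS_def')

lemma rcos_mem_image_iff:
  assumes J: "ideal J R" and A: "ideal A R" and x: "x \<in> carrier R"
  shows "J +> x \<in> (+>) J ` A \<longleftrightarrow> x \<in> A <+> J"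
proof
  assume "J +> x \<in> (+>) J ` A"
  then obtain a where a: "a \<in> A" and eq: "J +> x = J +> a" by auto
  have ac: "a \<in> carrier R" using ideal.Icarr[OF A a] .
  have "x \<ominus> a \<in> J" using quotient_eq_iff_same_a_r_cos[OF J x ac] eq by simp
  moreover have "x = a \<oplus> (x \<ominus> a)" using x ac by algebra
  ultimately show "x \<in> A <+> J" using a by (auto simp: set_add_def')
next
  assume "x \<in> A <+> J"
  then obtain a j where a: "a \<in> A" and j: "j \<in> J" and xaj: "x = a \<oplus> j" by (rule set_add_memE)
  have ac: "a \<in> carrier R" using ideal.Icarr[OF A a] .
  have "x \<ominus> a = j" using xaj ac ideal.Icarr[OF J j] by algebra
  then have "J +> x = J +> a" using quotient_eq_iff_same_a_r_cos[OF J x ac] j by simp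
  then show "J +> x \<in> (+>) J ` A" using a by blast
qed

lemma quot_genideal_image:
  assumes J: "ideal J R" and S: "S \<subseteq> carrier R"
  shows "(+>) J ` (Idl S) = genideal (R Quot J) ((+>) J ` S)"
proof
  have Q: "ring (R Quot J)" using ideal.quotient_is_ring[OF J] .
  have hS: "(+>) J ` S \<subseteq> carrier (R Quot J)" using quot_carrier[OF J] S by auto
  show "genideal (R Quot J) ((+>) J ` S) \<subseteq> (+>) J ` (Idl S)"
    by (rule ring.genideal_minimal[OF Q ring_ideal_imp_quot_ideal[OF J genideal_ideal[OF S]]])
       (use genideal_self[OF S] in blast)
  have "ideal {r \<in> carrier R. J +> r \<in> genideal (R Quot J) ((+>) J ` S)} R"
    by (rule ring_hom_ring.ideal_vimage[OF ideal.rcos_ring_hom_ring[OF J] ring.genideal_ideal[OF Q hS]])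
  moreover have "S \<subseteq> {r \<in> carrier R. J +> r \<in> genideal (R Quot J) ((+>) J ` S)}"
    using S ring.genideal_self[OF Q hS] by blast
  ultimately have "Idl S \<subseteq> {r \<in> carrier R. J +> r \<in> genideal (R Quot J) ((+>) J ` S)}"
    by (rule genideal_minimal)
  then show "(+>) J ` (Idl S) \<subseteq> genideal (R Quot J) ((+>) J ` S)" by blast
qed

lemma quot_ideal_prod_image:
  assumes J: "ideal J R" and A: "ideal A R" and B: "ideal B R"
  shows "(+>) J ` (A \<cdot> B) = ideal_prod (R Quot J) ((+>) J ` A) ((+>) J ` B)"
proof -
  have hom: "(+>) J \<in> ring_hom R (R Quot J)" using ideal.rcos_ring_hom[OF J] .
  have AB: "A <#> B \<subseteq> carrier R"
    using ideal.Icarr[OF A] ideal.Icarr[OF B] by (auto simp: set_mult_def)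
  have "(+>) J ` (A <#> B) = set_mult (R Quot J) ((+>) J ` A) ((+>) J ` B)"
    using ring_hom_mult[OF hom] ideal.Icarr[OF A] ideal.Icarr[OF B]
    by (auto simp: set_mult_def image_iff) (metis ring_hom_mult[OF hom])+
  then show ?thesis
    using ideal_prod_eq_genideal[OF A B] quot_genideal_image[OF J AB]
      ring.ideal_prod_eq_genideal[OF ideal.quotient_is_ring[OF J]
        ring_ideal_imp_quot_ideal[OF J A] ring_ideal_imp_quot_ideal[OF J B]]
    by simp
qed

lemma quot_ideal_pow_image:
  assumes J: "ideal J R" and A: "ideal A R"
  shows "(+>) J ` ideal_pow R A n = ideal_pow (R Quot J) ((+>) J ` A) n"
  by (induction n) (simp_all add: quot_carrier[OF J] quot_ideal_prod_image[OF J A ideal_pow_ideal[OF A]])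

lemma aluffi_torsion_free_modulo_if_quotient:
  assumes J1: "ideal J1 R" and J2: "ideal J2 R" and I: "ideal I R"
    and ATF: "aluffi_torsion_free (R Quot J1) (quot_image R J1 J2) (quot_image R J1 I)"
  shows "aluffi_torsion_free_modulo R J2 I J1"
  unfolding aluffi_torsion_free_modulo_def
proof (intro allI impI subsetI)
  fix n x assume n: "1 \<le> n" and x: "x \<in> (J2 <+> J1) \<inter> (ideal_pow R I n <+> J1)"
  have P: "ideal (ideal_pow R I m) R" for m using ideal_pow_ideal[OF I] .
  have xc: "x \<in> carrier R"
    using x ideal.Icarr[OF add_ideals[OF J2 J1]] by blast
  have "J1 +> x \<in> quot_image R J1 J2 \<inter> ideal_pow (R Quot J1) (quot_image R J1 I) n"
    using x rcos_mem_image_iff[OF J1 J2 xc] rcos_mem_image_iff[OF J1 P xc]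
    unfolding quot_image_def quot_ideal_pow_image[OF J1 I, symmetric] by blast
  also have "\<dots> = (+>) J1 ` (J2 \<cdot> ideal_pow R I (n - 1))"
    using ATF n unfolding aluffi_torsion_free_def quot_image_def
    by (simp add: quot_ideal_pow_image[OF J1 I] quot_ideal_prod_image[OF J1 J2 P])
  finally show "x \<in> J2 \<cdot> ideal_pow R I (n - 1) <+> J1"
    using rcos_mem_image_iff[OF J1 ideal_prod_is_ideal[OF J2 P] xc] by blast
qed

lemma aluffi_torsion_free_iff_modulo_zero:
  assumes J: "ideal J R" and I: "ideal I R" and JI: "J \<subseteq> I"
  shows "aluffi_torsion_free R J I \<longleftrightarrow> aluffi_torsion_free_modulo R J I {\<zero>}"
proof -
  have P: "ideal (ideal_pow R I m) R" for m using ideal_pow_ideal[OF I] .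
  have "J \<cdot> ideal_pow R I (n - 1) \<subseteq> J \<inter> ideal_pow R I n" if "1 \<le> n" for n
    using ideal_prod_ideal_pow_subset[OF J I JI, of "n - 1"] that by simp
  then show ?thesis
    unfolding aluffi_torsion_free_def aluffi_torsion_free_modulo_def
    using JI ideal.Icarr[OF J] ideal.Icarr[OF P] ideal_prod_in_carrier[OF J P]
    by (simp add: set_add_zero_right subset_iff) blast
qed

end

context cring begin

lemma genideal_insert:
  assumes "f \<in> carrier R" "S \<subseteq> carrier R"
  shows "Idl (insert f S) = PIdl f <+> Idl S"
proof
  have fS: "insert f S \<subseteq> carrier R" using assms by blast
  have PF: "ideal (PIdl f) R" and IS: "ideal (Idl S) R"
    using cgenideal_ideal[OF assms(1)] genideal_ideal[OF assms(2)] .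
  show "Idl (insert f S) \<subseteq> PIdl f <+> Idl S"
    using set_add_upper1[OF PF IS] set_add_upper2[OF PF IS] cgenideal_self[OF assms(1)]
      genideal_self[OF assms(2)]
    by (intro genideal_minimal add_ideals PF IS) auto
  have "f \<in> Idl (insert f S)" using genideal_self[OF fS] by blast
  then show "PIdl f <+> Idl S \<subseteq> Idl (insert f S)"
    by (intro set_add_least genideal_ideal fS cgenideal_minimal subset_Idl_subset) auto
qed

lemma mem_cgenideal_prodE:
  assumes "f \<in> carrier R" "ideal B R" "x \<in> (PIdl f) \<cdot> B"
  obtains b where "b \<in> B" "x = f \<otimes> b"
proof -
  from assms(3) have "\<exists>b\<in>B. x = f \<otimes> b"
  proof (induction rule: ideal_prod.induct)
    case (prod i j)
    from prod(1) obtain r where r: "r \<in> carrier R" "i = r \<otimes> f" unfolding cgenideal_def by blast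
    have j: "j \<in> carrier R" using ideal.Icarr[OF assms(2) prod(2)] .
    have "i \<otimes> j = f \<otimes> (r \<otimes> j)" using r j assms(1) by (metis m_assoc m_comm)
    moreover have "r \<otimes> j \<in> B" using assms(2) r(1) prod(2) by (simp add: ideal.I_l_closed)
    ultimately show ?case by blast
  next
    case (sum s1 s2)
    then obtain b1 b2 where b: "b1 \<in> B" "b2 \<in> B" "s1 = f \<otimes> b1" "s2 = f \<otimes> b2" by blast
    then have "s1 \<oplus> s2 = f \<otimes> (b1 \<oplus> b2)"
      using assms(1) ideal.Icarr[OF assms(2)] by (simp add: r_distr)
    moreover have "b1 \<oplus> b2 \<in> B"
      using b assms(2) by (simp add: additive_subgroup.a_closed ideal.axioms(1))
    ultimately show ?case by blast
  qed
  then show ?thesis using that by blast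
qed

lemma mult_mem_ideal_prod_ideal_pow_Suc:
  assumes J: "ideal J R" and I: "ideal I R" and K: "ideal K R" and f: "f \<in> I"
    and y: "y \<in> J \<cdot> ideal_pow R I n <+> K"
  shows "f \<otimes> y \<in> J \<cdot> ideal_pow R I (Suc n) <+> K"
proof -
  have P: "ideal (ideal_pow R I n) R" using ideal_pow_ideal[OF I] .
  have JP: "ideal (J \<cdot> ideal_pow R I m) R" for m using ideal_prod_is_ideal[OF J ideal_pow_ideal[OF I]] .
  have fc: "f \<in> carrier R" using ideal.Icarr[OF I f] .
  from y obtain z k where z: "z \<in> J \<cdot> ideal_pow R I n" and k: "k \<in> K" and yzk: "y = z \<oplus> k"
    by (rule set_add_memE)
  have "f \<otimes> z \<in> I \<cdot> (J \<cdot> ideal_pow R I n)" using f z by (rule ideal_prod.prod)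
  also have "\<dots> = J \<cdot> (I \<cdot> ideal_pow R I n)"
    by (metis ideal_prod_assoc[OF I J P] ideal_prod_assoc[OF J I P] ideal_prod_commute[OF I J])
  finally have "f \<otimes> z \<in> J \<cdot> ideal_pow R I (Suc n)" by simp
  moreover have "f \<otimes> k \<in> K" using K k fc by (simp add: ideal.I_l_closed)
  moreover have "f \<otimes> y = f \<otimes> z \<oplus> f \<otimes> k"
    using yzk fc ideal.Icarr[OF JP z] ideal.Icarr[OF K k] by (simp add: r_distr)
  ultimately show ?thesis by (auto simp: set_add_def')
qed

lemma aluffi_torsion_free_insert_memE:
  assumes K: "ideal K R" and I: "ideal I R" and f: "f \<in> carrier R"
    and ATF: "aluffi_torsion_free R (PIdl f <+> K) I" and n: "1 \<le> n"
    and x: "x \<in> PIdl f <+> K" "x \<in> ideal_pow R I n <+> K"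
  obtains a k where "a \<in> ideal_pow R I (n - 1)" "k \<in> K" "x = f \<otimes> a \<oplus> k"
proof -
  have PF: "ideal (PIdl f) R" using cgenideal_ideal[OF f] .
  have L: "ideal (PIdl f <+> K) R" using add_ideals[OF PF K] .
  have P: "ideal (ideal_pow R I m) R" for m using ideal_pow_ideal[OF I] .
  from x(2) obtain u k1 where u: "u \<in> ideal_pow R I n" and k1: "k1 \<in> K" and xu: "x = u \<oplus> k1"
    by (rule set_add_memE)
  have uc: "u \<in> carrier R" using ideal.Icarr[OF P u] .
  have "u \<in> PIdl f <+> K"
    using x(1) ideal_add_iff_right[OF L _ uc] set_add_upper2[OF PF K] k1 xu by blast
  then have "u \<in> (PIdl f <+> K) \<cdot> ideal_pow R I (n - 1)"
    using ATF n u unfolding aluffi_torsion_free_def by blast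
  also have "\<dots> = ((PIdl f) \<cdot> ideal_pow R I (n - 1)) <+> (K \<cdot> ideal_pow R I (n - 1))"
    using ideal_prod_distr(2)[OF P PF K] .
  finally obtain v w where v: "v \<in> (PIdl f) \<cdot> ideal_pow R I (n - 1)"
      and w: "w \<in> K \<cdot> ideal_pow R I (n - 1)" and uvw: "u = v \<oplus> w"
    by (rule set_add_memE)
  obtain a where a: "a \<in> ideal_pow R I (n - 1)" and va: "v = f \<otimes> a"
    using mem_cgenideal_prodE[OF f P v] .
  have wK: "w \<in> K" using w ideal_prod_inter[OF K P] by blast
  have "x = f \<otimes> a \<oplus> (w \<oplus> k1)"
    using xu uvw va f ideal.Icarr[OF P a] ideal.Icarr[OF K wK] ideal.Icarr[OF K k1]
    by (simp add: a_assoc)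
  moreover have "w \<oplus> k1 \<in> K"
    using wK k1 K by (simp add: additive_subgroup.a_closed ideal.axioms(1))
  ultimately show ?thesis using that a by blast
qed

lemma regular_sequence_quot_mult_memD:
  assumes J: "ideal J R" and fs: "set fs \<subseteq> carrier R"
    and reg: "regular_sequence (R Quot J) (map ((+>) J) fs)"
    and i: "i < length fs" and a: "a \<in> carrier R"
    and fa: "fs ! i \<otimes> a \<in> J <+> Idl (set (take i fs))"
  shows "a \<in> J <+> Idl (set (take i fs))"
proof -
  let ?K = "Idl (set (take i fs))"
  have S: "set (take i fs) \<subseteq> carrier R" using fs set_take_subset by fast
  have K: "ideal ?K R" using genideal_ideal[OF S] .
  have fc: "fs ! i \<in> carrier R" using fs i by auto
  have mem_iff: "J +> y \<in> genideal (R Quot J) (set (take i (map ((+>) J) fs)))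
      \<longleftrightarrow> y \<in> J <+> ?K" if "y \<in> carrier R" for y
    using rcos_mem_image_iff[OF J K that] set_add_comm[OF additive_subgroup.a_subset[OF ideal.axioms(1)] additive_subgroup.a_subset[OF ideal.axioms(1)], OF K J]
      quot_genideal_image[OF J S] by (auto simp: take_map subset_iff)
  have "(J +> fs ! i) \<otimes>\<^bsub>R Quot J\<^esub> (J +> a) = J +> (fs ! i \<otimes> a)"
    using ring_hom_mult[OF ideal.rcos_ring_hom[OF J] fc a] by simp
  then show ?thesis
    using reg i a fa mem_iff[of a] mem_iff[of "fs ! i \<otimes> a"] fc quot_carrier[OF J]
    unfolding regular_sequence_def by auto
qed

context
  fixes J I K f
  assumes J: "ideal J R" and I: "ideal I R" and K: "ideal K R" and JI: "J \<subseteq> I" and f: "f \<in> I"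
    and ATF_mod: "aluffi_torsion_free_modulo R J I (PIdl f <+> K)"
    and ATF: "aluffi_torsion_free R (PIdl f <+> K) I"
    and nzd: "\<And>a. a \<in> carrier R \<Longrightarrow> f \<otimes> a \<in> J <+> K \<Longrightarrow> a \<in> J <+> K"
begin

lemma aluffi_torsion_free_modulo_descend_decompose:
  assumes x: "x \<in> J <+> K" "x \<in> ideal_pow R I (Suc n) <+> K"
  obtains a y k where "a \<in> J <+> K" "a \<in> ideal_pow R I n <+> K"
    "y \<in> J \<cdot> ideal_pow R I n" "k \<in> K" "x = f \<otimes> a \<oplus> (y \<oplus> k)"
proof -
  have fc: "f \<in> carrier R" using ideal.Icarr[OF I f] .
  have PF: "ideal (PIdl f) R" using cgenideal_ideal[OF fc] .
  have P: "ideal (ideal_pow R I m) R" for m using ideal_pow_ideal[OF I] .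
  have JP: "ideal (J \<cdot> ideal_pow R I n) R" using ideal_prod_is_ideal[OF J P] .
  have JK: "ideal (J <+> K) R" and PK: "ideal (ideal_pow R I (Suc n) <+> K) R"
    using add_ideals[OF J K] add_ideals[OF P K] .
  have "x \<in> J \<cdot> ideal_pow R I n <+> (PIdl f <+> K)"
    using ATF_mod[unfolded aluffi_torsion_free_modulo_def, rule_format, of "Suc n"] x
      set_add_mono[OF order_refl set_add_upper2[OF PF K]] by auto
  then obtain y z where y: "y \<in> J \<cdot> ideal_pow R I n" and z: "z \<in> PIdl f <+> K"
    and xyz: "x = y \<oplus> z"
    by (rule set_add_memE)
  have zc: "z \<in> carrier R" using ideal.Icarr[OF add_ideals[OF PF K] z] .
  have "y \<in> J" "y \<in> ideal_pow R I (Suc n)"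
    using y ideal_prod_ideal_pow_subset[OF J I JI] by blast+
  then have zJK: "z \<in> J <+> K" and zIK: "z \<in> ideal_pow R I (Suc n) <+> K"
    using x xyz ideal_add_iff_left[OF JK _ zc] ideal_add_iff_left[OF PK _ zc]
      set_add_upper1[OF J K] set_add_upper1[OF P K] by blast+
  obtain a k where a: "a \<in> ideal_pow R I n" and k: "k \<in> K" and zak: "z = f \<otimes> a \<oplus> k"
    using aluffi_torsion_free_insert_memE[OF K I fc ATF _ z zIK] by (auto simp del: ideal_pow.simps)
  have ac: "a \<in> carrier R" using ideal.Icarr[OF P a] .
  have "f \<otimes> a \<in> J <+> K"
    using zJK zak k ideal_add_iff_right[OF JK _ m_closed[OF fc ac]] set_add_upper2[OF J K] by blast
  then have "a \<in> J <+> K" using nzd ac by blast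
  moreover have "a \<in> ideal_pow R I n <+> K" using a set_add_upper1[OF P K] by blast
  moreover have "x = f \<otimes> a \<oplus> (y \<oplus> k)"
    using xyz zak fc ac ideal.Icarr[OF JP y] ideal.Icarr[OF K k] by algebra
  ultimately show ?thesis using that y k by blast
qed

lemma aluffi_torsion_free_modulo_descend: "aluffi_torsion_free_modulo R J I K"
proof -
  have JPK: "ideal (J \<cdot> ideal_pow R I m <+> K) R" for m
    using add_ideals[OF ideal_prod_is_ideal[OF J ideal_pow_ideal[OF I]] K] .
  have step: "x \<in> J \<cdot> ideal_pow R I n <+> K"
    if "x \<in> J <+> K" "x \<in> ideal_pow R I (Suc n) <+> K" for n x
    using that
  proof (induction n arbitrary: x)
    case 0
    then show ?case using ideal_prod_one[OF J] by simp
  next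
    case (Suc m)
    obtain a y k where a: "a \<in> J <+> K" "a \<in> ideal_pow R I (Suc m) <+> K"
      and y: "y \<in> J \<cdot> ideal_pow R I (Suc m)" and k: "k \<in> K" and x: "x = f \<otimes> a \<oplus> (y \<oplus> k)"
      by (rule aluffi_torsion_free_modulo_descend_decompose[OF Suc.prems])
    have "f \<otimes> a \<in> J \<cdot> ideal_pow R I (Suc m) <+> K"
      using Suc.IH[OF a] mult_mem_ideal_prod_ideal_pow_Suc[OF J I K f] by blast
    moreover have "y \<oplus> k \<in> J \<cdot> ideal_pow R I (Suc m) <+> K"
      using y k set_add_upper1 set_add_upper2 ideal_prod_is_ideal[OF J ideal_pow_ideal[OF I]] K
        set_add_least[OF JPK] by (auto simp: set_add_def')
    ultimately show ?case
      using x additive_subgroup.a_closed[OF ideal.axioms(1)[OF JPK]] by metis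
  qed
  show ?thesis
    unfolding aluffi_torsion_free_modulo_def
  proof (intro allI impI subsetI)
    fix n x assume "1 \<le> n" "x \<in> (J <+> K) \<inter> (ideal_pow R I n <+> K)"
    then show "x \<in> J \<cdot> ideal_pow R I (n - 1) <+> K" using step[of x "n - 1"] by simp
  qed
qed

end

lemma aluffi_torsion_free_modulo_take:
  assumes J: "ideal J R" and I: "ideal I R" and JI: "J \<subseteq> I" and fs: "set fs \<subseteq> I"
    and strong: "strongly_aluffi_torsion_free R fs I"
    and reg: "regular_sequence (R Quot J) (map ((+>) J) fs)"
    and ATF_mod: "aluffi_torsion_free_modulo R J I (Idl (set fs))"
    and k: "k \<le> length fs"
  shows "aluffi_torsion_free_modulo R J I (Idl (set (take k fs)))"
  using k
proof (induction k rule: inc_induct)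
  case base
  then show ?case using ATF_mod by simp
next
  case (step k)
  have fsc: "set fs \<subseteq> carrier R" using fs ideal.Icarr[OF I] by blast
  have S: "set (take k fs) \<subseteq> carrier R" using fsc set_take_subset by fast
  have fk: "fs ! k \<in> I" using fs step.hyps(2) nth_mem by blast
  have take_Suc: "Idl (set (take (Suc k) fs)) = PIdl (fs ! k) <+> Idl (set (take k fs))"
    using genideal_insert[OF ideal.Icarr[OF I fk] S] take_Suc_conv_app_nth[OF step.hyps(2)] by simp
  show ?case
  proof (rule aluffi_torsion_free_modulo_descend[OF J I genideal_ideal[OF S] JI fk])
    show "aluffi_torsion_free_modulo R J I (PIdl (fs ! k) <+> Idl (set (take k fs)))"
      using step.IH take_Suc by simp
    show "aluffi_torsion_free R (PIdl (fs ! k) <+> Idl (set (take k fs))) I"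
      using strong step.hyps(2) take_Suc unfolding strongly_aluffi_torsion_free_def
      by (metis One_nat_def Suc_leI atLeastAtMost_iff le_add1 plus_1_eq_Suc)
    show "a \<in> J <+> Idl (set (take k fs))"
      if "a \<in> carrier R" "fs ! k \<otimes> a \<in> J <+> Idl (set (take k fs))" for a
      using regular_sequence_quot_mult_memD[OF J fsc reg step.hyps(2) that] .
  qed
qed

end

theorem theorem2p15:
  fixes R :: "('a, 'b) ring_scheme" and J1 J2 I :: "'a set" and fs :: "'a list"
  assumes "cring R" and "noetherian_ring R"
    and "ideal J1 R" and "ideal J2 R" and "ideal I R"
    and "J1 \<subseteq> I" and "J2 \<subseteq> I"
    and "aluffi_torsion_free (R Quot J1) (quot_image R J1 J2) (quot_image R J1 I)"
    and "minimal_generating_list R fs J1"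
    and "strongly_aluffi_torsion_free R fs I"
    and "regular_sequence (R Quot J2) (map (\<lambda>f. a_r_coset R J2 f) fs)"
  shows "aluffi_torsion_free R J2 I"
proof -
  interpret cring R by fact
  have fsc: "set fs \<subseteq> carrier R" and J1_eq: "J1 = Idl\<^bsub>R\<^esub> (set fs)"
    using assms(9) unfolding minimal_generating_list_def by auto
  have "set fs \<subseteq> I" using genideal_self[OF fsc] J1_eq assms(6) by blast
  moreover have "aluffi_torsion_free_modulo R J2 I (Idl\<^bsub>R\<^esub> (set fs))"
    using aluffi_torsion_free_modulo_if_quotient[OF assms(3,4,5,8)] J1_eq by simp
  ultimately have "aluffi_torsion_free_modulo R J2 I (Idl\<^bsub>R\<^esub> (set (take 0 fs)))"
    using assms by (intro aluffi_torsion_free_modulo_take) auto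
  then show ?thesis
    using aluffi_torsion_free_iff_modulo_zero[OF assms(4,5,7)] genideal_empty by simp
qed

end
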